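(* Let $\mathcal F$ be a proper filter on $\omega$. The game $\mathfrak G(\mathcal F,[\omega]^{<\omega},\mathcal F^c)$ is equivalent to $\mathfrak G(\mathcal F,\omega,\mathcal F^c)$ (a player has a winning strategy in one iff the same player has one in the other). Consequently, in $\mathfrak G(\mathcal F,[\omega]^{<\omega},\mathcal F^c)$, player I never has a winning strategy, and player II has a winning strategy if and only if $\mathcal F$ is not a Ramsey ultrafilter.
   Context: A filter on $\omega$ is a family $\mathcal F\subseteq\mathcal P(\omega)$ closed under finite intersections and supersets and containing all cofinite sets; it is proper if all its members are infinite. $\mathcal F^c=\mathcal P(\omega)\setminus\mathcal F$. Game $\mathfrak G(\mathcal X,\omega,\mathcal Z)$: at each stage $k$, I chooses $X_k\in\mathcal X$ and II responds with $n_k\in X_k$; II wins if $\{n_k:k\in\omega\}\in\mathcal Z$. Game $\mathfrak G(\mathcal X,[\omega]^{<\omega},\mathcal Z)$: at each stage $k$, I chooses $X_k\in\mathcal X$ and II responds with a nonempty finite $s_k\subseteq X_k$; II wins if $\bigcup_k s_k\in\mathcal Z$. In each game I wins when II does not. A tree is a set $T$ of finite sequences of natural numbers containing the empty sequence and closed under initial segments; it is an $\mathcal F$-tree if for each $\bar s\in T$ there is $X_{\bar s}\in\mathcal F$ with $\bar s^\frown n\in T$ for all $n\in X_{\bar s}$; a branch (infinite sequence with all initial segments in $T$) is in $\mathcal F$ if its set of values is in $\mathcal F$. $\mathcal F$ is Ramsey if every $\mathcal F$-tree has a branch in $\mathcal F$; a Ramsey ultrafilter is an ultrafilter that is Ramsey.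 *)

theory Defs
  imports Main
begin

definition is_filter :: "nat set set \<Rightarrow> bool" where
  "is_filter F \<longleftrightarrow>
     (\<forall>A\<in>F. \<forall>B\<in>F. A \<inter> B \<in> F) \<and>
     (\<forall>A B. A \<in> F \<longrightarrow> A \<subseteq> B \<longrightarrow> B \<in> F) \<and>
     (\<forall>A. finite (- A) \<longrightarrow> A \<in> F)"

definition proper_filter :: "nat set set \<Rightarrow> bool" where
  "proper_filter F \<longleftrightarrow> is_filter F \<and> (\<forall>A\<in>F. infinite A)"

definition ultrafilter :: "nat set set \<Rightarrow> bool" where
  "ultrafilter F \<longleftrightarrow> proper_filter F \<and> (\<forall>A. A \<in> F \<or> - A \<in> F)"

definition is_tree :: "nat list set \<Rightarrow> bool" where
  "is_tree T \<longleftrightarrow> [] \<in> T \<and> (\<forall>s t. s @ t \<in> T \<longrightarrow> s \<in> T)"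

definition F_tree :: "nat set set \<Rightarrow> nat list set \<Rightarrow> bool" where
  "F_tree F T \<longleftrightarrow> is_tree T \<and> (\<forall>s\<in>T. \<exists>X\<in>F. \<forall>n\<in>X. s @ [n] \<in> T)"

definition branch :: "nat list set \<Rightarrow> (nat \<Rightarrow> nat) \<Rightarrow> bool" where
  "branch T b \<longleftrightarrow> (\<forall>k. map b [0..<k] \<in> T)"

definition Ramsey :: "nat set set \<Rightarrow> bool" where
  "Ramsey F \<longleftrightarrow> (\<forall>T. F_tree F T \<longrightarrow> (\<exists>b. branch T b \<and> range b \<in> F))"

definition Ramsey_ultrafilter :: "nat set set \<Rightarrow> bool" where
  "Ramsey_ultrafilter F \<longleftrightarrow> ultrafilter F \<and> Ramsey F"

(* Strategy of I: maps the finite sequence of II's previous moves to I's next move.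
   Strategy of II: maps the finite sequence of I's moves so far (including the current one)
   to II's response. (II's own earlier moves are determined by these.) *)

definition I_wins_nat :: "nat set set \<Rightarrow> nat set set \<Rightarrow> bool" where
  "I_wins_nat \<X> \<Z> \<longleftrightarrow> (\<exists>\<sigma> :: nat list \<Rightarrow> nat set.
     (\<forall>h. \<sigma> h \<in> \<X>) \<and>
     (\<forall>n :: nat \<Rightarrow> nat. (\<forall>k. n k \<in> \<sigma> (map n [0..<k])) \<longrightarrow> range n \<notin> \<Z>))"

definition II_wins_nat :: "nat set set \<Rightarrow> nat set set \<Rightarrow> bool" where
  "II_wins_nat \<X> \<Z> \<longleftrightarrow> (\<exists>\<tau> :: nat set list \<Rightarrow> nat.
     (\<forall>Xs X. set Xs \<subseteq> \<X> \<longrightarrow> X \<in> \<X> \<longrightarrow> \<tau> (Xs @ [X]) \<in> X) \<and>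
     (\<forall>X :: nat \<Rightarrow> nat set. (\<forall>k. X k \<in> \<X>) \<longrightarrow>
        range (\<lambda>k. \<tau> (map X [0..<Suc k])) \<in> \<Z>))"

definition I_wins_fin :: "nat set set \<Rightarrow> nat set set \<Rightarrow> bool" where
  "I_wins_fin \<X> \<Z> \<longleftrightarrow> (\<exists>\<sigma> :: nat set list \<Rightarrow> nat set.
     (\<forall>h. \<sigma> h \<in> \<X>) \<and>
     (\<forall>s :: nat \<Rightarrow> nat set.
        (\<forall>k. finite (s k) \<and> s k \<noteq> {} \<and> s k \<subseteq> \<sigma> (map s [0..<k])) \<longrightarrow>
        (\<Union>k. s k) \<notin> \<Z>))"

definition II_wins_fin :: "nat set set \<Rightarrow> nat set set \<Rightarrow> bool" where
  "II_wins_fin \<X> \<Z> \<longleftrightarrow> (\<exists>\<tau> :: nat set list \<Rightarrow> nat set.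
     (\<forall>Xs X. set Xs \<subseteq> \<X> \<longrightarrow> X \<in> \<X> \<longrightarrow>
        finite (\<tau> (Xs @ [X])) \<and> \<tau> (Xs @ [X]) \<noteq> {} \<and> \<tau> (Xs @ [X]) \<subseteq> X) \<and>
     (\<forall>X :: nat \<Rightarrow> nat set. (\<forall>k. X k \<in> \<X>) \<longrightarrow>
        (\<Union>k. \<tau> (map X [0..<Suc k])) \<in> \<Z>))"

end

theory Submission
  imports Defs
begin

(* The two games are interchangeable: II may answer with singletons, and conversely may keep
   one point of each finite answer, since the complement of F is closed under subsets; I may
   restrict the finite-set game to singleton answers.

   I never wins: against a fixed strategy of I, II runs two plays whose answers are pairwise
   distinct, and the two resulting disjoint sets cannot both lie in F.

   If F is not an ultrafilter, pick A with neither A nor -A in F; every set in F meets A, so II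
   can answer inside A. If F is an ultrafilter that is not Ramsey, II follows an F-tree without
   a branch in F. Conversely, for a Ramsey ultrafilter the answers of a strategy of II at a
   position form a set in F (otherwise I plays its complement), so the answers span an F-tree;
   its branch in F is the outcome of a play, which defeats the strategy. *)

lemma proper_filter_Int: "proper_filter F \<Longrightarrow> A \<in> F \<Longrightarrow> B \<in> F \<Longrightarrow> A \<inter> B \<in> F"
  unfolding proper_filter_def is_filter_def by blast

lemma proper_filter_mono: "proper_filter F \<Longrightarrow> A \<in> F \<Longrightarrow> A \<subseteq> B \<Longrightarrow> B \<in> F"
  unfolding proper_filter_def is_filter_def by blast

lemma proper_filter_infinite: "proper_filter F \<Longrightarrow> A \<in> F \<Longrightarrow> infinite A"
  unfolding proper_filter_def by blast

lemma proper_filter_Int_nonempty: "proper_filter F \<Longrightarrow> A \<in> F \<Longrightarrow> B \<in> F \<Longrightarrow> A \<inter> B \<noteq> {}"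
  using proper_filter_Int proper_filter_infinite by fastforce

lemma I_wins_fin_imp_I_wins_nat:
  assumes "I_wins_fin \<X> \<Z>"
  shows "I_wins_nat \<X> \<Z>"
proof -
  obtain \<sigma> where \<sigma>_in: "\<forall>h. \<sigma> h \<in> \<X>" and \<sigma>_wins: "\<forall>s :: nat \<Rightarrow> nat set.
      (\<forall>k. finite (s k) \<and> s k \<noteq> {} \<and> s k \<subseteq> \<sigma> (map s [0..<k])) \<longrightarrow> (\<Union>k. s k) \<notin> \<Z>"
    using assms unfolding I_wins_fin_def by blast
  show ?thesis
    unfolding I_wins_nat_def
  proof (intro exI conjI allI impI)
    show "\<sigma> (map (\<lambda>n. {n}) h) \<in> \<X>" for h
      using \<sigma>_in by blast
  next
    fix n :: "nat \<Rightarrow> nat"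
    assume "\<forall>k. n k \<in> \<sigma> (map (\<lambda>n. {n}) (map n [0..<k]))"
    then have "(\<Union>k. {n k}) \<notin> \<Z>"
      using \<sigma>_wins[rule_format, of "\<lambda>k. {n k}"] by (simp add: comp_def)
    then show "range n \<notin> \<Z>"
      by (simp add: UNION_singleton_eq_range)
  qed
qed

lemma II_wins_nat_imp_II_wins_fin:
  assumes "II_wins_nat \<X> \<Z>"
  shows "II_wins_fin \<X> \<Z>"
proof -
  obtain \<tau> :: "nat set list \<Rightarrow> nat" where
    "\<forall>Xs X. set Xs \<subseteq> \<X> \<longrightarrow> X \<in> \<X> \<longrightarrow> \<tau> (Xs @ [X]) \<in> X"
    "\<forall>X. (\<forall>k. X k \<in> \<X>) \<longrightarrow> range (\<lambda>k. \<tau> (map X [0..<Suc k])) \<in> \<Z>"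
    using assms unfolding II_wins_nat_def by blast
  then show ?thesis
    unfolding II_wins_fin_def
    by (intro exI[of _ "\<lambda>Xs. {\<tau> Xs}"]) (simp add: UNION_singleton_eq_range)
qed

lemma II_wins_fin_imp_II_wins_nat:
  assumes "II_wins_fin \<X> \<Z>" and subset_closed: "\<forall>A\<in>\<Z>. Pow A \<subseteq> \<Z>"
  shows "II_wins_nat \<X> \<Z>"
proof -
  obtain \<tau> where \<tau>_legal: "\<forall>Xs X. set Xs \<subseteq> \<X> \<longrightarrow> X \<in> \<X> \<longrightarrow>
      finite (\<tau> (Xs @ [X])) \<and> \<tau> (Xs @ [X]) \<noteq> {} \<and> \<tau> (Xs @ [X]) \<subseteq> X"
    and \<tau>_wins: "\<forall>X. (\<forall>k. X k \<in> \<X>) \<longrightarrow> (\<Union>k. \<tau> (map X [0..<Suc k])) \<in> \<Z>"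
    using assms(1) unfolding II_wins_fin_def by blast
  define \<tau>' where "\<tau>' Xs = (SOME n. n \<in> \<tau> Xs)" for Xs
  have \<tau>'_in: "\<tau>' (Xs @ [X]) \<in> \<tau> (Xs @ [X])" if "set Xs \<subseteq> \<X>" "X \<in> \<X>" for Xs X
    unfolding \<tau>'_def using \<tau>_legal that by (simp add: some_in_eq)
  show ?thesis
    unfolding II_wins_nat_def
  proof (intro exI conjI allI impI)
    show "\<tau>' (Xs @ [X]) \<in> X" if "set Xs \<subseteq> \<X>" "X \<in> \<X>" for Xs X
      using \<tau>'_in[OF that] \<tau>_legal that by blast
  next
    fix X :: "nat \<Rightarrow> nat set"
    assume X: "\<forall>k. X k \<in> \<X>"
    have "\<tau>' (map X [0..<Suc k]) \<in> \<tau> (map X [0..<Suc k])" for k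
      using \<tau>'_in[of "map X [0..<k]" "X k"] X by auto
    then have "range (\<lambda>k. \<tau>' (map X [0..<Suc k])) \<subseteq> (\<Union>k. \<tau> (map X [0..<Suc k]))"
      by blast
    with \<tau>_wins X show "range (\<lambda>k. \<tau>' (map X [0..<Suc k])) \<in> \<Z>"
      using subset_closed by blast
  qed
qed

lemma infinite_moves_disjoint_plays:
  fixes \<sigma> :: "nat list \<Rightarrow> nat set"
  assumes infinite: "\<And>h. infinite (\<sigma> h)"
  obtains a b where "\<And>k. a k \<in> \<sigma> (map a [0..<k])" and "\<And>k. b k \<in> \<sigma> (map b [0..<k])"
    and "range a \<inter> range b = {}"
proof -
  define fresh where "fresh h E = (SOME x. x \<in> \<sigma> h - E)" for h E
  have fresh: "fresh h E \<in> \<sigma> h - E" if "finite E" for h E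
  proof -
    have "\<sigma> h - E \<noteq> {}"
      using infinite_imp_nonempty[OF Diff_infinite_finite[OF that infinite]] .
    then show ?thesis
      unfolding fresh_def by (rule some_in_eq[THEN iffD2])
  qed
  define next_a where "next_a = (\<lambda>(as, bs). fresh as (set as \<union> set bs))"
  define next_b where "next_b = (\<lambda>(as, bs). fresh bs (insert (next_a (as, bs)) (set as \<union> set bs)))"
  define history where
    "history = rec_nat ([], []) (\<lambda>_ p. (fst p @ [next_a p], snd p @ [next_b p]))"
  define a b where "a k = next_a (history k)" and "b k = next_b (history k)" for k
  have history: "history k = (map a [0..<k], map b [0..<k])" for k
    by (induction k) (simp_all add: history_def a_def b_def)
  have a_step: "a k = next_a (map a [0..<k], map b [0..<k])"
    and b_step: "b k = next_b (map a [0..<k], map b [0..<k])" for k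
    using a_def[of k] b_def[of k] by (simp_all only: history)
  have a: "a k \<in> \<sigma> (map a [0..<k]) - a ` {..<k} - b ` {..<k}" for k
    using fresh[of "a ` {..<k} \<union> b ` {..<k}" "map a [0..<k]"]
    by (subst a_step) (simp add: next_a_def atLeast0LessThan)
  have b: "b k \<in> \<sigma> (map b [0..<k]) - a ` {..<Suc k} - b ` {..<k}" for k
    using fresh[of "insert (a k) (a ` {..<k} \<union> b ` {..<k})" "map b [0..<k]"]
    by (subst b_step) (simp add: next_b_def atLeast0LessThan lessThan_Suc flip: a_step)
  have "a i \<noteq> b j" for i j
  proof (cases "i \<le> j")
    case True
    then have "a i \<in> a ` {..<Suc j}" by simp
    moreover have "b j \<notin> a ` {..<Suc j}" using b[of j] by blast
    ultimately show ?thesis by metis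
  next
    case False
    then have "b j \<in> b ` {..<i}" by simp
    moreover have "a i \<notin> b ` {..<i}" using a[of i] by blast
    ultimately show ?thesis by metis
  qed
  then have "range a \<inter> range b = {}" by blast
  moreover have "a k \<in> \<sigma> (map a [0..<k])" "b k \<in> \<sigma> (map b [0..<k])" for k
    using a[of k] b[of k] by simp_all
  ultimately show thesis using that by blast
qed

lemma proper_filter_not_I_wins_nat:
  assumes F: "proper_filter F"
  shows "\<not> I_wins_nat F (- F)"
proof
  assume "I_wins_nat F (- F)"
  then obtain \<sigma> where \<sigma>_in: "\<And>h. \<sigma> h \<in> F"
    and \<sigma>_wins: "\<And>n. (\<forall>k. n k \<in> \<sigma> (map n [0..<k])) \<Longrightarrow> range n \<in> F"
    unfolding I_wins_nat_def by auto
  have infinite: "\<And>h. infinite (\<sigma> h)"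
    using proper_filter_infinite[OF F \<sigma>_in] .
  obtain a b where "\<And>k. a k \<in> \<sigma> (map a [0..<k])" "\<And>k. b k \<in> \<sigma> (map b [0..<k])"
    and disjoint: "range a \<inter> range b = {}"
    using infinite_moves_disjoint_plays[of \<sigma>, OF infinite] by blast
  then have "range a \<in> F" "range b \<in> F" using \<sigma>_wins by blast+
  with disjoint show False using proper_filter_Int_nonempty[OF F] by blast
qed

lemma II_wins_nat_if_tree:
  fixes T :: "nat list set"
  assumes root: "[] \<in> T"
    and extend: "\<And>s X. s \<in> T \<Longrightarrow> X \<in> \<X> \<Longrightarrow> \<exists>n\<in>X. s @ [n] \<in> T"
    and branches: "\<And>b. branch T b \<Longrightarrow> range b \<in> \<Z>"
  shows "II_wins_nat \<X> \<Z>"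
proof -
  define pick where "pick s X = (SOME n. n \<in> X \<and> s @ [n] \<in> T)" for s X
  define path where "path Xs = foldl (\<lambda>s X. s @ [pick s X]) [] Xs" for Xs
  have pick: "pick s X \<in> X \<and> s @ [pick s X] \<in> T" if "s \<in> T" "X \<in> \<X>" for s X
    unfolding pick_def using extend[OF that] by (rule someI2_bex) blast
  have path_snoc: "path (Xs @ [X]) = path Xs @ [pick (path Xs) X]" for Xs X
    by (simp add: path_def)
  have path_in_T: "set Xs \<subseteq> \<X> \<Longrightarrow> path Xs \<in> T" for Xs
    by (induction Xs rule: rev_induct) (simp_all add: path_def root pick)
  show ?thesis
    unfolding II_wins_nat_def
  proof (intro exI conjI allI impI)
    show "last (path (Xs @ [X])) \<in> X" if "set Xs \<subseteq> \<X>" "X \<in> \<X>" for Xs X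
      using pick[OF path_in_T that(2)] that by (simp add: path_snoc)
  next
    fix X :: "nat \<Rightarrow> nat set"
    assume X: "\<forall>k. X k \<in> \<X>"
    define b where "b = (\<lambda>k. last (path (map X [0..<Suc k])))"
    have "path (map X [0..<k]) = map b [0..<k]" for k
      by (induction k) (simp_all add: b_def path_snoc, simp add: path_def)
    then have "branch T b"
      unfolding branch_def using path_in_T X by (metis image_subset_iff set_map)
    then show "range (\<lambda>k. last (path (map X [0..<Suc k]))) \<in> \<Z>"
      unfolding b_def by (rule branches)
  qed
qed

lemma not_ultrafilter_II_wins_nat:
  assumes F: "proper_filter F" and "\<not> ultrafilter F"
  shows "II_wins_nat F (- F)"
proof -
  obtain A where "A \<notin> F" and "- A \<notin> F"
    using assms unfolding ultrafilter_def by blast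
  show ?thesis
  proof (rule II_wins_nat_if_tree[of "lists A"])
    show "\<exists>n\<in>X. s @ [n] \<in> lists A" if "s \<in> lists A" "X \<in> F" for s X
    proof -
      have "\<not> X \<subseteq> - A" using proper_filter_mono[OF F \<open>X \<in> F\<close>] \<open>- A \<notin> F\<close> by blast
      with that show ?thesis by auto
    qed
    show "range b \<in> - F" if "branch (lists A) b" for b
    proof -
      have "map b [0..<Suc k] \<in> lists A" for k
        using that unfolding branch_def by blast
      then have "range b \<subseteq> A" by auto
      then show ?thesis using proper_filter_mono[OF F] \<open>A \<notin> F\<close> by blast
    qed
  qed simp
qed

lemma not_Ramsey_II_wins_nat:
  assumes F: "proper_filter F" and "\<not> Ramsey F"
  shows "II_wins_nat F (- F)"
proof -
  obtain T where T: "F_tree F T" and no_branch: "\<And>b. branch T b \<Longrightarrow> range b \<notin> F"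
    using assms unfolding Ramsey_def by blast
  show ?thesis
  proof (rule II_wins_nat_if_tree[of T])
    show "[] \<in> T" using T unfolding F_tree_def is_tree_def by blast
    show "\<exists>n\<in>X. s @ [n] \<in> T" if "s \<in> T" "X \<in> F" for s X
    proof -
      obtain Y where "Y \<in> F" "\<forall>n\<in>Y. s @ [n] \<in> T"
        using T \<open>s \<in> T\<close> unfolding F_tree_def by blast
      with proper_filter_Int_nonempty[OF F \<open>X \<in> F\<close>] show ?thesis by blast
    qed
  qed (use no_branch in blast)
qed

definition II_replies :: "nat set set \<Rightarrow> (nat set list \<Rightarrow> nat) \<Rightarrow> nat set list \<Rightarrow> nat set" where
  "II_replies F \<tau> Xs = {\<tau> (Xs @ [X]) | X. X \<in> F}"

definition I_move_for :: "nat set set \<Rightarrow> (nat set list \<Rightarrow> nat) \<Rightarrow> nat set list \<Rightarrow> nat \<Rightarrow> nat set" where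
  "I_move_for F \<tau> Xs n = (SOME X. X \<in> F \<and> \<tau> (Xs @ [X]) = n)"

definition I_moves_for :: "nat set set \<Rightarrow> (nat set list \<Rightarrow> nat) \<Rightarrow> nat list \<Rightarrow> nat set list" where
  "I_moves_for F \<tau> = foldl (\<lambda>Xs n. Xs @ [I_move_for F \<tau> Xs n]) []"

(* Each node comes with one sequence of moves of I producing it, chosen coherently along
   extensions, so that the nodes of a branch are produced by a single play. *)
definition II_reply_tree :: "nat set set \<Rightarrow> (nat set list \<Rightarrow> nat) \<Rightarrow> nat list set" where
  "II_reply_tree F \<tau> =
     {s. \<forall>i<length s. s ! i \<in> II_replies F \<tau> (I_moves_for F \<tau> (take i s))}"

lemma I_move_for_reply:
  assumes "n \<in> II_replies F \<tau> Xs"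
  shows "I_move_for F \<tau> Xs n \<in> F \<and> \<tau> (Xs @ [I_move_for F \<tau> Xs n]) = n"
  using assms someI_ex[of "\<lambda>X. X \<in> F \<and> \<tau> (Xs @ [X]) = n"]
  unfolding II_replies_def I_move_for_def by blast

lemma I_moves_for_Nil [simp]: "I_moves_for F \<tau> [] = []"
  by (simp add: I_moves_for_def)

lemma I_moves_for_snoc [simp]:
  "I_moves_for F \<tau> (s @ [n]) = I_moves_for F \<tau> s @ [I_move_for F \<tau> (I_moves_for F \<tau> s) n]"
  by (simp add: I_moves_for_def)

lemma II_reply_tree_Nil: "[] \<in> II_reply_tree F \<tau>"
  by (simp add: II_reply_tree_def)

lemma II_reply_tree_snoc:
  "s @ [n] \<in> II_reply_tree F \<tau> \<longleftrightarrow>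
     s \<in> II_reply_tree F \<tau> \<and> n \<in> II_replies F \<tau> (I_moves_for F \<tau> s)"
  unfolding II_reply_tree_def by (auto simp: nth_append less_Suc_eq)

lemma II_reply_tree_prefix: "s @ t \<in> II_reply_tree F \<tau> \<Longrightarrow> s \<in> II_reply_tree F \<tau>"
  by (induction t rule: rev_induct) (simp_all add: II_reply_tree_snoc flip: append_assoc)

lemma I_moves_for_in:
  "s \<in> II_reply_tree F \<tau> \<Longrightarrow> set (I_moves_for F \<tau> s) \<subseteq> F"
  by (induction s rule: rev_induct) (simp_all add: II_reply_tree_snoc I_move_for_reply)

lemma ultrafilter_II_replies_in:
  assumes F: "ultrafilter F" and legal: "\<And>X. X \<in> F \<Longrightarrow> \<tau> (Xs @ [X]) \<in> X"
  shows "II_replies F \<tau> Xs \<in> F"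
proof (rule ccontr)
  let ?C = "- II_replies F \<tau> Xs"
  assume "II_replies F \<tau> Xs \<notin> F"
  then have "?C \<in> F" using F unfolding ultrafilter_def by blast
  then have "\<tau> (Xs @ [?C]) \<in> ?C" and "\<tau> (Xs @ [?C]) \<in> II_replies F \<tau> Xs"
    using legal unfolding II_replies_def by blast+
  then show False by blast
qed

lemma ultrafilter_F_tree_II_reply_tree:
  assumes F: "ultrafilter F"
    and legal: "\<And>Xs X. set Xs \<subseteq> F \<Longrightarrow> X \<in> F \<Longrightarrow> \<tau> (Xs @ [X]) \<in> X"
  shows "F_tree F (II_reply_tree F \<tau>)"
  unfolding F_tree_def is_tree_def
proof (intro conjI allI impI ballI)
  show "[] \<in> II_reply_tree F \<tau>" by (rule II_reply_tree_Nil)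
  show "s \<in> II_reply_tree F \<tau>" if "s @ t \<in> II_reply_tree F \<tau>" for s t
    using that by (rule II_reply_tree_prefix)
  show "\<exists>X\<in>F. \<forall>n\<in>X. s @ [n] \<in> II_reply_tree F \<tau>" if s: "s \<in> II_reply_tree F \<tau>" for s
  proof
    show "II_replies F \<tau> (I_moves_for F \<tau> s) \<in> F"
      using ultrafilter_II_replies_in[OF F] legal I_moves_for_in[OF s] by blast
  qed (simp add: II_reply_tree_snoc s)
qed

lemma branch_II_reply_tree_is_play:
  assumes "branch (II_reply_tree F \<tau>) b"
  obtains X where "\<And>k. X k \<in> F" and "\<And>k. \<tau> (map X [0..<Suc k]) = b k"
proof -
  define X where "X k = I_move_for F \<tau> (I_moves_for F \<tau> (map b [0..<k])) (b k)" for k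
  have moves: "I_moves_for F \<tau> (map b [0..<k]) = map X [0..<k]" for k
    by (induction k) (simp_all add: X_def)
  have "map b [0..<k] @ [b k] \<in> II_reply_tree F \<tau>" for k
    using assms unfolding branch_def by (metis map_append list.map upt_Suc zero_le)
  then have "b k \<in> II_replies F \<tau> (I_moves_for F \<tau> (map b [0..<k]))" for k
    by (simp add: II_reply_tree_snoc)
  then have "X k \<in> F \<and> \<tau> (map X [0..<Suc k]) = b k" for k
    using I_move_for_reply by (simp add: X_def flip: moves)
  with that show thesis by blast
qed

lemma Ramsey_ultrafilter_not_II_wins_nat:
  assumes "Ramsey_ultrafilter F"
  shows "\<not> II_wins_nat F (- F)"
proof
  assume "II_wins_nat F (- F)"
  then obtain \<tau> :: "nat set list \<Rightarrow> nat" where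
    legal: "\<forall>Xs X. set Xs \<subseteq> F \<longrightarrow> X \<in> F \<longrightarrow> \<tau> (Xs @ [X]) \<in> X" and
    wins: "\<forall>X. (\<forall>k. X k \<in> F) \<longrightarrow> range (\<lambda>k. \<tau> (map X [0..<Suc k])) \<in> - F"
    unfolding II_wins_nat_def by blast
  have "F_tree F (II_reply_tree F \<tau>)"
    using assms legal ultrafilter_F_tree_II_reply_tree
    unfolding Ramsey_ultrafilter_def by blast
  then obtain b where b: "branch (II_reply_tree F \<tau>) b" and "range b \<in> F"
    using assms unfolding Ramsey_ultrafilter_def Ramsey_def by blast
  obtain X where "\<And>k. X k \<in> F" and replies: "\<And>k. \<tau> (map X [0..<Suc k]) = b k"
    using branch_II_reply_tree_is_play[OF b] by blast
  then have "range (\<lambda>k. \<tau> (map X [0..<Suc k])) \<in> - F" using wins by blast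
  moreover have "(\<lambda>k. \<tau> (map X [0..<Suc k])) = b" using replies by (intro ext)
  ultimately have "range b \<notin> F" by (metis ComplD)
  with \<open>range b \<in> F\<close> show False by contradiction
qed

theorem theorem2p17:
  fixes F :: "nat set set"
  assumes "proper_filter F"
  shows "(I_wins_fin F (- F) \<longleftrightarrow> I_wins_nat F (- F)) \<and>
         (II_wins_fin F (- F) \<longleftrightarrow> II_wins_nat F (- F)) \<and>
         \<not> I_wins_fin F (- F) \<and>
         (II_wins_fin F (- F) \<longleftrightarrow> \<not> Ramsey_ultrafilter F)"
proof -
  have not_I_nat: "\<not> I_wins_nat F (- F)"
    using proper_filter_not_I_wins_nat[OF assms] .
  then have not_I_fin: "\<not> I_wins_fin F (- F)"
    using I_wins_fin_imp_I_wins_nat by blast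
  have subset_closed: "\<forall>A\<in>- F. Pow A \<subseteq> - F"
    using proper_filter_mono[OF assms] by blast
  have II_fin_iff_nat: "II_wins_fin F (- F) \<longleftrightarrow> II_wins_nat F (- F)"
    using II_wins_fin_imp_II_wins_nat[OF _ subset_closed] II_wins_nat_imp_II_wins_fin by blast
  have "II_wins_nat F (- F) \<longleftrightarrow> \<not> Ramsey_ultrafilter F"
    using Ramsey_ultrafilter_not_II_wins_nat not_ultrafilter_II_wins_nat[OF assms]
      not_Ramsey_II_wins_nat[OF assms]
    unfolding Ramsey_ultrafilter_def by blast
  with not_I_nat not_I_fin II_fin_iff_nat show ?thesis by blast
qed

end
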